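(* Let $L\le\mathrm{Aff}(\mathbb{R}^n)$ be a subgroup whose centralizer in $\mathrm{Aff}(\mathbb{R}^n)$ acts transitively on $\mathbb{R}^n$. Then the action of $L$ on $\mathbb{R}^n$ is proper if and only if $L$ is a closed subgroup of $\mathrm{Aff}(\mathbb{R}^n)$.
   Context: $\mathrm{Aff}(\mathbb{R}^n)$ is the Lie group of affine transformations of $\mathbb{R}^n$. An action of a topological group $L$ on a locally compact Hausdorff space $X$ is proper if for every compact $K\subseteq X$ the set $\{\ell\in L\mid \ell K\cap K\neq\emptyset\}$ is compact. *)

theory Defs
  imports "HOL-Analysis.Analysis"
begin

text \<open>An affine transformation x \<mapsto> A x + b of R^n is represented by the pair (A, b) with
  A invertible.  Aff(R^n) carries the Lie group topology, i.e. the subspace topology of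
  the matrix/vector space real^'n^'n \<times> real^'n.\<close>

type_synonym 'n aff = "(real^'n^'n) \<times> (real^'n)"

definition aff_group :: "'n::finite aff set" where
  "aff_group = {(A, b). invertible A}"

definition aff_app :: "'n::finite aff \<Rightarrow> real^'n \<Rightarrow> real^'n" where
  "aff_app g x = fst g *v x + snd g"

definition aff_mult :: "'n::finite aff \<Rightarrow> 'n aff \<Rightarrow> 'n aff" where
  "aff_mult g h = (fst g ** fst h, fst g *v snd h + snd g)"

definition aff_one :: "'n::finite aff" where
  "aff_one = (mat 1, 0)"

definition aff_inv :: "'n::finite aff \<Rightarrow> 'n aff" where
  "aff_inv g = (matrix_inv (fst g), - (matrix_inv (fst g) *v snd g))"

definition aff_subgroup :: "'n::finite aff set \<Rightarrow> bool" where
  "aff_subgroup L \<longleftrightarrow> L \<subseteq> aff_group \<and> aff_one \<in> L \<and>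
     (\<forall>g\<in>L. \<forall>h\<in>L. aff_mult g h \<in> L) \<and> (\<forall>g\<in>L. aff_inv g \<in> L)"

definition aff_centralizer :: "'n::finite aff set \<Rightarrow> 'n aff set" where
  "aff_centralizer L = {c \<in> aff_group. \<forall>l\<in>L. aff_mult c l = aff_mult l c}"

definition aff_transitive :: "'n::finite aff set \<Rightarrow> bool" where
  "aff_transitive C \<longleftrightarrow> (\<forall>x y. \<exists>c\<in>C. aff_app c x = y)"

text \<open>Proper action: for every compact K, {l \<in> L | l K \<inter> K \<noteq> {}} is compact
  (compactness is intrinsic, so compact in L iff compact in the ambient space).\<close>
definition aff_proper_action :: "'n::finite aff set \<Rightarrow> bool" where
  "aff_proper_action L \<longleftrightarrow>
     (\<forall>K. compact K \<longrightarrow> compact {l \<in> L. aff_app l ` K \<inter> K \<noteq> {}})"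

end

theory Submission
  imports Defs
begin

(* For l in L and c in C we have l (c 0) = c (l 0) = c (snd l).  Choosing c_x in C with
   c_x 0 = x gives l x = c_x (snd l): every l in L is determined by its translation part, and
   the columns of its linear part are c_{e_j} (snd l) - snd l.  Hence the linear part of l grows
   at most affinely in |snd l|.  If l moves a point k of a compact K back into K, then near
   a fixed k0 we get c_{k0} (snd l) = l k + fst l (k0 - k), and inverting c_{k0} bounds
   |snd l|; a finite subcover of K makes the bound uniform. *)

lemma aff_app_mult: "aff_app (aff_mult g h) x = aff_app g (aff_app h x)"
  by (simp add: aff_app_def aff_mult_def matrix_vector_mul_assoc matrix_vector_right_distrib add.assoc)

lemma aff_app_zero [simp]: "aff_app g 0 = snd g"
  by (simp add: aff_app_def)

lemma matrix_inv_left: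
  fixes A :: "'a::semiring_1^'n^'m"
  assumes "invertible A"
  shows "matrix_inv A ** A = mat 1"
proof -
  have "\<exists>A'. A ** A' = mat 1 \<and> A' ** A = mat 1" using assms by (simp add: invertible_def)
  from someI_ex[OF this] show ?thesis by (simp add: matrix_inv_def)
qed

lemma norm_le_onorm_matrix_inv:
  fixes A :: "real^'n::finite^'n"
  assumes "invertible A"
  shows "norm x \<le> onorm ((*v) (matrix_inv A)) * norm (A *v x)"
proof -
  have "x = matrix_inv A *v (A *v x)"
    by (simp add: matrix_vector_mul_assoc matrix_inv_left[OF assms])
  then show ?thesis
    by (metis onorm[OF matrix_vector_mul_bounded_linear])
qed

lemma aff_inv_app:
  assumes "g \<in> aff_group"
  shows "aff_app (aff_inv g) (aff_app g x) = x"
  using matrix_inv_left[of "fst g"] assms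
  by (auto simp: aff_group_def aff_app_def aff_inv_def matrix_vector_right_distrib matrix_vector_mul_assoc)

lemma aff_norm_le_inverse_growth:
  assumes "g \<in> aff_group"
  shows "norm x \<le> onorm ((*v) (matrix_inv (fst g))) * (norm (aff_app g x) + norm (snd g))"
proof -
  have "norm x \<le> onorm ((*v) (matrix_inv (fst g))) * norm (fst g *v x)"
    using assms by (intro norm_le_onorm_matrix_inv) (auto simp: aff_group_def)
  also have "\<dots> \<le> onorm ((*v) (matrix_inv (fst g))) * (norm (aff_app g x) + norm (snd g))"
    unfolding aff_app_def
    by (intro mult_left_mono onorm_pos_le[OF matrix_vector_mul_bounded_linear])
       (metis add_diff_cancel norm_triangle_ineq4)
  finally show ?thesis .
qed

lemma norm_matrix_le_component:
  fixes A :: "real^'n::finite^'m::finite"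
  assumes "\<And>i j. \<bar>A $ i $ j\<bar> \<le> B"
  shows "norm A \<le> real CARD('m) * real CARD('n) * B"
proof -
  have "norm A \<le> (\<Sum>i\<in>UNIV. norm (A $ i))"
    unfolding norm_vec_def by (rule L2_set_le_sum) simp
  also have "\<dots> \<le> (\<Sum>i\<in>(UNIV::'m set). \<Sum>j\<in>(UNIV::'n set). B)"
    by (intro sum_mono order_trans[OF norm_le_l1_cart] assms)
  finally show ?thesis by simp
qed

lemma centralizer_commutes:
  assumes "c \<in> aff_centralizer L" "l \<in> L"
  shows "aff_app l (aff_app c x) = aff_app c (aff_app l x)"
proof -
  have "aff_mult c l = aff_mult l c" using assms by (auto simp: aff_centralizer_def)
  then show ?thesis by (metis aff_app_mult)
qed

lemma aff_app_via_centralizer: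
  assumes "c \<in> aff_centralizer L" "l \<in> L"
  shows "aff_app l (snd c) = aff_app c (snd l)"
  using centralizer_commutes[OF assms, of 0] by simp

(* If the centralizer is transitive, the entries of the linear part of every l in L are
   bounded affinely by the norm of its translation part: column j of fst l equals
   c_j (snd l) - snd l for a centralizer element c_j with c_j 0 = e_j. *)
lemma linear_part_entries_bound:
  fixes L :: "'n::finite aff set"
  assumes "aff_transitive (aff_centralizer L)"
  obtains \<beta> \<gamma> :: real where "0 \<le> \<beta>" "0 \<le> \<gamma>"
    "\<And>l i j. l \<in> L \<Longrightarrow> \<bar>fst l $ i $ j\<bar> \<le> \<beta> * norm (snd l) + \<gamma>"
proof -
  obtain s where s: "\<And>x. s x \<in> aff_centralizer L" "\<And>x. aff_app (s x) 0 = x"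
    using assms unfolding aff_transitive_def by metis
  define \<beta> where "\<beta> = (\<Sum>j\<in>UNIV. onorm ((*v) (fst (s (axis j 1)))) + 1)"
  define \<gamma> where "\<gamma> = (\<Sum>j\<in>UNIV. norm (snd (s (axis j 1))))"
  have onorm_nonneg: "0 \<le> onorm ((*v) (fst g))" for g :: "'n aff"
    by (rule onorm_pos_le[OF matrix_vector_mul_bounded_linear])
  have "\<bar>fst l $ i $ j\<bar> \<le> \<beta> * norm (snd l) + \<gamma>" if "l \<in> L" for l i j
  proof -
    let ?c = "s (axis j 1)"
    have column: "column j (fst l) = aff_app ?c (snd l) - snd l"
      using aff_app_via_centralizer[OF s(1) that, of "axis j 1"] s(2)[of "axis j 1"]
      by (simp add: aff_app_def matrix_vector_mult_basis eq_diff_eq)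
    have "\<bar>fst l $ i $ j\<bar> \<le> norm (column j (fst l))"
      using component_le_norm_cart[of "column j (fst l)" i] by (simp add: column_def)
    also have "\<dots> \<le> norm (fst ?c *v snd l) + norm (snd ?c) + norm (snd l)"
      unfolding column aff_app_def
      using norm_triangle_ineq4[of "fst ?c *v snd l + snd ?c" "snd l"]
        norm_triangle_ineq[of "fst ?c *v snd l" "snd ?c"] by linarith
    also have "\<dots> \<le> (onorm ((*v) (fst ?c)) + 1) * norm (snd l) + norm (snd ?c)"
      using onorm[OF matrix_vector_mul_bounded_linear, of "fst ?c" "snd l"]
      by (simp add: distrib_right)
    also have "\<dots> \<le> \<beta> * norm (snd l) + \<gamma>"
      unfolding \<beta>_def \<gamma>_def
    proof (intro add_mono mult_right_mono)
      show "onorm ((*v) (fst ?c)) + 1 \<le> (\<Sum>j\<in>UNIV. onorm ((*v) (fst (s (axis j 1)))) + 1)"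
        by (rule member_le_sum[where f = "\<lambda>j. onorm ((*v) (fst (s (axis j 1)))) + 1"])
           (auto intro: add_nonneg_nonneg onorm_nonneg)
      show "norm (snd ?c) \<le> (\<Sum>j\<in>UNIV. norm (snd (s (axis j 1))))"
        by (rule member_le_sum[where f = "\<lambda>j. norm (snd (s (axis j 1)))"]) auto
    qed simp
    finally show ?thesis .
  qed
  moreover have "0 \<le> \<beta>" "0 \<le> \<gamma>"
    unfolding \<beta>_def \<gamma>_def by (auto intro!: sum_nonneg add_nonneg_nonneg onorm_nonneg)
  ultimately show ?thesis using that by blast
qed

lemma linear_part_bound:
  fixes L :: "'n::finite aff set"
  assumes "aff_transitive (aff_centralizer L)"
  obtains \<alpha> \<gamma> :: real where "0 \<le> \<alpha>" "0 \<le> \<gamma>"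
    "\<And>l. l \<in> L \<Longrightarrow> onorm ((*v) (fst l)) \<le> \<alpha> * norm (snd l) + \<gamma>"
    "\<And>l. l \<in> L \<Longrightarrow> norm (fst l) \<le> \<alpha> * norm (snd l) + \<gamma>"
proof -
  obtain \<beta> \<gamma> where "0 \<le> \<beta>" "0 \<le> \<gamma>" and
    entries: "\<And>l i j. l \<in> L \<Longrightarrow> \<bar>fst l $ i $ j\<bar> \<le> \<beta> * norm (snd l) + \<gamma>"
    using linear_part_entries_bound[OF assms] by blast
  define N where "N = real CARD('n) * real CARD('n)"
  have "0 \<le> N" by (simp add: N_def)
  show ?thesis
  proof (rule that[of "N * \<beta>" "N * \<gamma>"])
    fix l assume "l \<in> L"
    show "onorm ((*v) (fst l)) \<le> N * \<beta> * norm (snd l) + N * \<gamma>"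
      using onorm_le_matrix_component[OF entries[OF \<open>l \<in> L\<close>]]
      by (simp add: N_def algebra_simps)
    show "norm (fst l) \<le> N * \<beta> * norm (snd l) + N * \<gamma>"
      using norm_matrix_le_component[OF entries[OF \<open>l \<in> L\<close>]]
      by (simp add: N_def algebra_simps)
  qed (use \<open>0 \<le> N\<close> \<open>0 \<le> \<beta>\<close> \<open>0 \<le> \<gamma>\<close> in simp_all)
qed

(* Uses c (snd l) = l k0 = l k + fst l (k0 - k) for the centralizer
   element c with c 0 = k0, and d small enough to absorb the linear growth of fst l. *)
lemma translation_bounded_near_point:
  fixes L :: "'n::finite aff set"
  assumes "aff_transitive (aff_centralizer L)"
  shows "\<exists>d>0. \<exists>R. \<forall>l\<in>L. \<forall>k. dist k k0 < d \<longrightarrow> norm (aff_app l k) \<le> Q \<longrightarrow> norm (snd l) \<le> R"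
proof -
  obtain \<alpha> \<gamma> where "0 \<le> \<alpha>" "0 \<le> \<gamma>"
    and linear: "\<And>l. l \<in> L \<Longrightarrow> onorm ((*v) (fst l)) \<le> \<alpha> * norm (snd l) + \<gamma>"
    using linear_part_bound[OF assms] by metis
  obtain c where c: "c \<in> aff_centralizer L" "snd c = k0"
    using assms unfolding aff_transitive_def by (metis aff_app_zero)
  have "c \<in> aff_group" using c(1) by (simp add: aff_centralizer_def)
  define a where "a = onorm ((*v) (matrix_inv (fst c)))"
  have "0 \<le> a" unfolding a_def by (rule onorm_pos_le[OF matrix_vector_mul_bounded_linear])
  define d where "d = 1 / (2 * (a * \<alpha> + 1))"
  have "0 \<le> a * \<alpha>" using \<open>0 \<le> a\<close> \<open>0 \<le> \<alpha>\<close> by simp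
  then have "0 < d" "d \<le> 1" "a * \<alpha> * d \<le> 1/2"
    unfolding d_def by (auto simp: field_simps)
  have "norm (snd l) \<le> 2 * a * (Q + \<gamma> + norm (snd c))"
    if l: "l \<in> L" and near: "dist k k0 < d" and image: "norm (aff_app l k) \<le> Q" for l k
  proof -
    let ?b = "snd l"
    have "aff_app c ?b = aff_app l k + fst l *v (k0 - k)"
      using aff_app_via_centralizer[OF c(1) l] c(2)
      by (simp add: aff_app_def matrix_vector_mult_diff_distrib algebra_simps)
    moreover have "norm (fst l *v (k0 - k)) \<le> (\<alpha> * norm ?b + \<gamma>) * d"
    proof -
      have "norm (fst l *v (k0 - k)) \<le> onorm ((*v) (fst l)) * norm (k0 - k)"
        by (rule onorm[OF matrix_vector_mul_bounded_linear])
      also have "\<dots> \<le> (\<alpha> * norm ?b + \<gamma>) * d"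
        using linear[OF l] near \<open>0 \<le> \<alpha>\<close> \<open>0 \<le> \<gamma>\<close>
        by (intro mult_mono) (auto simp: dist_norm norm_minus_commute)
      finally show ?thesis .
    qed
    ultimately have "norm (aff_app c ?b) \<le> Q + (\<alpha> * norm ?b + \<gamma>) * d"
      using image norm_triangle_ineq[of "aff_app l k" "fst l *v (k0 - k)"] by simp
    then have "norm ?b \<le> a * (Q + (\<alpha> * norm ?b + \<gamma>) * d + norm (snd c))"
      using aff_norm_le_inverse_growth[OF \<open>c \<in> aff_group\<close>, of ?b] \<open>0 \<le> a\<close>
      unfolding a_def[symmetric] by (meson add_right_mono mult_left_mono order_trans)
    also have "\<dots> = a * Q + (a * \<alpha> * d) * norm ?b + a * \<gamma> * d + a * norm (snd c)"
      by (simp add: algebra_simps)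
    also have "\<dots> \<le> a * Q + 1/2 * norm ?b + a * \<gamma> + a * norm (snd c)"
    proof -
      have "(a * \<alpha> * d) * norm ?b \<le> 1/2 * norm ?b"
        using \<open>a * \<alpha> * d \<le> 1/2\<close> by (rule mult_right_mono) simp
      moreover have "a * \<gamma> * d \<le> a * \<gamma>"
        using \<open>d \<le> 1\<close> \<open>0 \<le> a\<close> \<open>0 \<le> \<gamma>\<close> by (intro mult_left_le) auto
      ultimately show ?thesis by linarith
    qed
    finally show ?thesis by (simp add: algebra_simps)
  qed
  with \<open>0 < d\<close> show ?thesis by blast
qed

(* Uniform bound on the translation parts of the maps in L returning a point of a compact
   set K into K, from the local bound and a finite subcover of K. *)
lemma translation_bounded_on_compact:
  fixes L :: "'n::finite aff set"
  assumes "aff_transitive (aff_centralizer L)" "compact K"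
  obtains R where "\<And>l k. l \<in> L \<Longrightarrow> k \<in> K \<Longrightarrow> aff_app l k \<in> K \<Longrightarrow> norm (snd l) \<le> R"
proof -
  obtain Q where Q: "\<And>q. q \<in> K \<Longrightarrow> norm q \<le> Q"
    using compact_imp_bounded[OF assms(2)] by (auto simp: bounded_iff)
  have "\<forall>k0. \<exists>d R. 0 < d \<and>
      (\<forall>l\<in>L. \<forall>k. dist k k0 < d \<longrightarrow> norm (aff_app l k) \<le> Q \<longrightarrow> norm (snd l) \<le> R)"
    using translation_bounded_near_point[OF assms(1)] by blast
  then obtain d R where d: "\<And>k0. 0 < d k0" and R: "\<And>k0 l k. l \<in> L \<Longrightarrow> dist k k0 < d k0 \<Longrightarrow>
      norm (aff_app l k) \<le> Q \<Longrightarrow> norm (snd l) \<le> R k0"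
    unfolding choice_iff' by metis
  obtain D where D: "D \<subseteq> K" "finite D" "K \<subseteq> (\<Union>k0\<in>D. ball k0 (d k0))"
  proof (rule compactE_image[OF assms(2), of K "\<lambda>k0. ball k0 (d k0)"])
    show "K \<subseteq> (\<Union>k0\<in>K. ball k0 (d k0))" using d by force
  qed auto
  show ?thesis
  proof (rule that[of "\<Sum>k0\<in>D. \<bar>R k0\<bar>"])
    fix l k assume "l \<in> L" "k \<in> K" "aff_app l k \<in> K"
    then obtain k0 where "k0 \<in> D" "dist k k0 < d k0"
      using D(3) by (force simp: dist_commute)
    then have "norm (snd l) \<le> \<bar>R k0\<bar>"
      using R[OF \<open>l \<in> L\<close>] Q[OF \<open>aff_app l k \<in> K\<close>] by force
    also have "\<dots> \<le> (\<Sum>k0\<in>D. \<bar>R k0\<bar>)"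
      using \<open>k0 \<in> D\<close> D(2) by (intro member_le_sum) auto
    finally show "norm (snd l) \<le> (\<Sum>k0\<in>D. \<bar>R k0\<bar>)" .
  qed
qed

definition uniformly_invertible :: "real \<Rightarrow> 'n::finite aff set" where
  "uniformly_invertible M = {g. \<forall>x. norm x \<le> M * norm (fst g *v x)}"

(* Uniform invertibility is a closed condition, unlike mere invertibility. *)
lemma closed_uniformly_invertible: "closed (uniformly_invertible M :: 'n::finite aff set)"
proof -
  have linear_part: "continuous_on UNIV (\<lambda>g::'n aff. fst g *v x)" for x
    unfolding matrix_vector_mult_def by (intro continuous_intros)
  have "uniformly_invertible M = (\<Inter>x. {g::'n aff. norm x \<le> M * norm (fst g *v x)})"
    by (auto simp: uniformly_invertible_def)
  also have "closed \<dots>"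
    by (intro closed_INT ballI closed_Collect_le continuous_intros linear_part)
  finally show ?thesis .
qed

lemma uniformly_invertible_subset: "uniformly_invertible M \<subseteq> (aff_group :: 'n::finite aff set)"
proof
  fix g :: "'n aff" assume g: "g \<in> uniformly_invertible M"
  have "x = 0" if "fst g *v x = 0" for x
    using g that by (auto simp: uniformly_invertible_def dest: spec[of _ x])
  then have "invertible (fst g)"
    by (simp add: invertible_left_inverse matrix_left_invertible_ker)
  then show "g \<in> aff_group" by (cases g) (simp add: aff_group_def)
qed

(* A bounded set closed under inversion is uniformly invertible: the inverses have
   bounded entries. *)
lemma bounded_symmetric_uniformly_invertible:
  fixes S :: "'n::finite aff set"
  assumes "S \<subseteq> aff_group" "bounded S" "\<And>g. g \<in> S \<Longrightarrow> aff_inv g \<in> S"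
  obtains M where "S \<subseteq> uniformly_invertible M"
proof -
  obtain B where B: "\<And>g. g \<in> S \<Longrightarrow> norm g \<le> B"
    using assms(2) by (auto simp: bounded_iff)
  define M where "M = real CARD('n) * real CARD('n) * B"
  have "g \<in> uniformly_invertible M" if "g \<in> S" for g
  proof -
    have "\<bar>matrix_inv (fst g) $ i $ j\<bar> \<le> B" for i j
    proof -
      have "\<bar>matrix_inv (fst g) $ i $ j\<bar> \<le> norm (matrix_inv (fst g) $ i)"
        by (rule component_le_norm_cart)
      also have "\<dots> \<le> norm (matrix_inv (fst g))"
        by (rule Finite_Cartesian_Product.norm_nth_le)
      also have "\<dots> \<le> norm (aff_inv g)"
        unfolding aff_inv_def by (rule norm_fst_le)
      also have "\<dots> \<le> B" using B assms(3) that by blast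
      finally show ?thesis .
    qed
    then have inverse_bound: "onorm ((*v) (matrix_inv (fst g))) \<le> M"
      unfolding M_def by (rule onorm_le_matrix_component)
    have "invertible (fst g)" using assms(1) that by (auto simp: aff_group_def)
    show ?thesis unfolding uniformly_invertible_def
    proof (intro CollectI allI)
      fix x
      have "norm x \<le> onorm ((*v) (matrix_inv (fst g))) * norm (fst g *v x)"
        by (rule norm_le_onorm_matrix_inv[OF \<open>invertible (fst g)\<close>])
      also have "\<dots> \<le> M * norm (fst g *v x)"
        by (rule mult_right_mono[OF inverse_bound]) simp
      finally show "norm x \<le> M * norm (fst g *v x)" .
    qed
  qed
  then show ?thesis using that by blast
qed

(* Compactness criterion in Aff(R^n): relatively closed, bounded and inverse-closed sets
   are compact, being closed in the ambient vector space. *)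
lemma compact_in_aff_group:
  fixes S :: "'n::finite aff set"
  assumes "closedin (top_of_set aff_group) S" "bounded S" "\<And>g. g \<in> S \<Longrightarrow> aff_inv g \<in> S"
  shows "compact S"
proof -
  have "S \<subseteq> aff_group" using assms(1) by (rule closedin_imp_subset)
  then obtain M where M: "S \<subseteq> uniformly_invertible M"
    using bounded_symmetric_uniformly_invertible assms(2,3) by blast
  obtain T where "closed T" "S = aff_group \<inter> T"
    using assms(1) by (auto simp: closedin_closed)
  then have "S = T \<inter> uniformly_invertible M"
    using M uniformly_invertible_subset by blast
  then have "closed S" using \<open>closed T\<close> closed_uniformly_invertible by auto
  then show ?thesis using assms(2) by (simp add: compact_eq_bounded_closed)
qed

definition aff_return_set :: "'n::finite aff set \<Rightarrow> (real^'n) set \<Rightarrow> 'n aff set" where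
  "aff_return_set L K = {l \<in> L. \<exists>k\<in>K. aff_app l k \<in> K}"

lemma aff_proper_action_iff_return_sets:
  "aff_proper_action L \<longleftrightarrow> (\<forall>K. compact K \<longrightarrow> compact (aff_return_set L K))"
proof -
  have "{l \<in> L. aff_app l ` K \<inter> K \<noteq> {}} = aff_return_set L K" for K
    by (auto simp: aff_return_set_def)
  then show ?thesis by (simp add: aff_proper_action_def)
qed

lemma return_set_inverse:
  assumes "aff_subgroup L" "l \<in> aff_return_set L K"
  shows "aff_inv l \<in> aff_return_set L K"
proof -
  obtain k where "l \<in> L" "k \<in> K" "aff_app l k \<in> K"
    using assms(2) by (auto simp: aff_return_set_def)
  moreover have "aff_app (aff_inv l) (aff_app l k) = k"
    using assms(1) \<open>l \<in> L\<close> by (intro aff_inv_app) (auto simp: aff_subgroup_def)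
  moreover have "aff_inv l \<in> L"
    using assms(1) \<open>l \<in> L\<close> by (simp add: aff_subgroup_def)
  ultimately show ?thesis
    by (auto simp: aff_return_set_def intro!: bexI[of _ "aff_app l k"])
qed

(* Returning a point of a compact set into itself is a closed condition on affine maps
   (projection along a compact factor). *)
lemma closed_returning_maps:
  assumes "compact K"
  shows "closed {g::'n::finite aff. \<exists>k\<in>K. aff_app g k \<in> K}"
proof -
  have "continuous_on UNIV (\<lambda>z::(real^'n) \<times> 'n aff. aff_app (snd z) (fst z))"
    unfolding aff_app_def matrix_vector_mult_def by (intro continuous_intros)
  then have "closed ((\<lambda>z::(real^'n) \<times> 'n aff. aff_app (snd z) (fst z)) -` K)"
    by (intro closed_vimage compact_imp_closed assms)
  from closed_compact_projection[OF assms this]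
  have "closed {g. \<exists>k. k \<in> K \<and> (k, g) \<in> (\<lambda>z. aff_app (snd z) (fst z)) -` K}" .
  moreover have "{g. \<exists>k. k \<in> K \<and> (k, g) \<in> (\<lambda>z. aff_app (snd z) (fst z)) -` K} =
      {g. \<exists>k\<in>K. aff_app g k \<in> K}"
    by auto
  ultimately show ?thesis by simp
qed

lemma return_set_closedin:
  assumes "closedin (top_of_set aff_group) L" "compact K"
  shows "closedin (top_of_set aff_group) (aff_return_set L K)"
proof -
  have "aff_return_set L K = L \<inter> (aff_group \<inter> {g. \<exists>k\<in>K. aff_app g k \<in> K})"
    using closedin_imp_subset[OF assms(1)] by (auto simp: aff_return_set_def)
  moreover have "closedin (top_of_set aff_group) (aff_group \<inter> {g. \<exists>k\<in>K. aff_app g k \<in> K})"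
    by (rule closedin_closed_Int[OF closed_returning_maps[OF assms(2)]])
  ultimately show ?thesis
    using closedin_Int[OF assms(1)] by simp
qed

lemma return_set_bounded:
  fixes L :: "'n::finite aff set"
  assumes "aff_transitive (aff_centralizer L)" "compact K"
  shows "bounded (aff_return_set L K)"
proof -
  obtain \<alpha> \<gamma> where "0 \<le> \<alpha>"
    and linear: "\<And>l. l \<in> L \<Longrightarrow> norm (fst l) \<le> \<alpha> * norm (snd l) + \<gamma>"
    using linear_part_bound[OF assms(1)] by metis
  obtain R where R: "\<And>l k. l \<in> L \<Longrightarrow> k \<in> K \<Longrightarrow> aff_app l k \<in> K \<Longrightarrow> norm (snd l) \<le> R"
    using translation_bounded_on_compact[OF assms] by blast
  have "norm l \<le> \<alpha> * R + \<gamma> + R" if returning: "l \<in> aff_return_set L K" for l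
  proof -
    obtain k where "l \<in> L" "k \<in> K" "aff_app l k \<in> K"
      using returning unfolding aff_return_set_def by blast
    then have "norm (snd l) \<le> R" by (rule R)
    have "norm l \<le> norm (fst l) + norm (snd l)"
      using norm_Pair_le[of "fst l" "snd l"] by simp
    also have "\<dots> \<le> \<alpha> * R + \<gamma> + R"
      using linear[OF \<open>l \<in> L\<close>] mult_left_mono[OF \<open>norm (snd l) \<le> R\<close> \<open>0 \<le> \<alpha>\<close>]
        \<open>norm (snd l) \<le> R\<close> by linarith
    finally show ?thesis .
  qed
  then show ?thesis unfolding bounded_iff by blast
qed

lemma closed_imp_proper:
  fixes L :: "'n::finite aff set"
  assumes "aff_subgroup L" "aff_transitive (aff_centralizer L)"
    and "closedin (top_of_set aff_group) L"
  shows "aff_proper_action L"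
  unfolding aff_proper_action_iff_return_sets
proof (intro allI impI)
  fix K :: "(real^'n) set" assume "compact K"
  show "compact (aff_return_set L K)"
    using return_set_closedin[OF assms(3) \<open>compact K\<close>]
      return_set_bounded[OF assms(2) \<open>compact K\<close>] return_set_inverse[OF assms(1)]
    by (rule compact_in_aff_group)
qed

(* Proper implies closed, for any subgroup: a convergent sequence in L has bounded
   translation parts, so it lies in the compact return set of a large ball. *)
lemma proper_imp_closed:
  fixes L :: "'n::finite aff set"
  assumes "aff_subgroup L" "aff_proper_action L"
  shows "closedin (top_of_set aff_group) L"
proof -
  have "closed L" unfolding closed_sequential_limits
  proof (intro allI impI, elim conjE)
    fix x g assume in_L: "\<forall>n. x n \<in> L" and lim: "x \<longlonglongrightarrow> g"
    have "bounded (range (\<lambda>n. snd (x n)))"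
      using tendsto_snd[OF lim] by (rule convergent_imp_bounded)
    then obtain R where R: "\<And>n. norm (snd (x n)) \<le> R"
      by (auto simp: bounded_iff)
    define S where "S = aff_return_set L (cball 0 R)"
    have "closed S"
      using assms(2) by (simp add: S_def aff_proper_action_iff_return_sets compact_imp_closed)
    moreover have "x n \<in> S" for n
    proof -
      have "0 \<le> R" by (rule order_trans[OF norm_ge_zero R])
      then have "0 \<in> cball 0 R" "aff_app (x n) 0 \<in> cball 0 R"
        using R[of n] by simp_all
      then show ?thesis using in_L unfolding S_def aff_return_set_def by blast
    qed
    ultimately have "g \<in> S" using lim closed_sequentially by blast
    then show "g \<in> L" by (simp add: S_def aff_return_set_def)
  qed
  then show ?thesis
    using assms(1) closedin_closed_Int[of L aff_group] by (simp add: aff_subgroup_def Int_absorb1)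
qed

theorem proposition7p2:
  fixes L :: "'n::finite aff set"
  assumes "aff_subgroup L"
    and "aff_transitive (aff_centralizer L)"
  shows "aff_proper_action L \<longleftrightarrow> closedin (top_of_set aff_group) L"
  by (rule iffI[OF proper_imp_closed[OF assms(1)] closed_imp_proper[OF assms]])

end
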